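(* Let $2\le k\le n$. For every Bayesian persuasion instance with $n$ actions and $k$ signals there exists an optimal signaling scheme with $k$ signals that is direct and persuasive and uses its $k$ signals to recommend $k$ distinct actions. Moreover, if the instance is symmetric, there exists an optimal direct and persuasive scheme with $k$ signals whose signals recommend exactly the actions $1,\dots,k$.
   Context: A Bayesian persuasion instance: a receiver chooses one of the actions $[n]=\{1,\dots,n\}$. Each action $i$ has a type $\theta_i$ from a finite set $\Theta_i$; the state of nature $\boldsymbol\theta=(\theta_1,\dots,\theta_n)$ is drawn from a commonly known distribution $q$ on $\Theta\subseteq\Theta_1\times\dots\times\Theta_n$, with $q_{\boldsymbol\theta}$ the probability of $\boldsymbol\theta$. Each type $t$ has a receiver value $\rho(t)$ and a sender value $\xi(t)$; if the receiver takes action $i$ in state $\boldsymbol\theta$, the receiver gets $\rho(\theta_i)$ and the sender gets $\xi(\theta_i)$. A signaling scheme with $k$ signals is a map $\varphi$ assigning to each state $\boldsymbol\theta$ a probability distribution $\varphi(\boldsymbol\theta,\cdot)$ on a signal set $\Sigma$ with $|\Sigma|=k$. The sender commits to $\varphi$, observes $\boldsymbol\theta$, sends $\sigma\sim\varphi(\boldsymbol\theta,\cdot)$; the receiver, knowing $q$ and $\varphi$, chooses for each signal an action maximizing her conditional expected utility given $\sigma$, breaking ties in favor of the sender (and remaining ties by a fixed rule). $u_{\mathcal S}(\varphi)$ and $u_{\mathcal R}(\varphi)$ denote the resulting expected utilities of sender and receiver. A scheme is optimal with $k$ signals if it maximizes $u_{\mathcal S}$ over all schemes with $k$ signals. A scheme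 is direct if each signal is identified with an action it recommends; a direct scheme is persuasive if for every signal $\sigma$ sent with positive probability and recommending action $i$, $\mathbb E[\rho(\theta_i)\mid\sigma]\ge \mathbb E[\rho(\theta_j)\mid \sigma]$ for all $j\in[n]$. An instance is symmetric if $q_{\boldsymbol\theta}=q_{\boldsymbol\theta'}$ whenever $\boldsymbol\theta'$ is a permutation of $\boldsymbol\theta$. *)

theory Defs
  imports Complex_Main "HOL-Combinatorics.Permutations"
begin

text \<open>Actions are 1..n (nat). A state is a function
  theta :: nat => 't giving the type of each action (only coordinates 1..n matter).
  Theta is the finite set of states, q the prior probabilities on Theta,
  rho / xi the receiver / sender values of a type.
  A signaling scheme with k signals uses the signal set {..<k} (0..k-1) and is
  a function phi :: state => signal => real.\<close>

definition bp_instance ::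
  "nat \<Rightarrow> (nat \<Rightarrow> 't) set \<Rightarrow> ((nat \<Rightarrow> 't) \<Rightarrow> real) \<Rightarrow> bool" where
  "bp_instance n Theta q \<longleftrightarrow>
     finite Theta \<and> (\<forall>th\<in>Theta. 0 \<le> q th) \<and> (\<Sum>th\<in>Theta. q th) = 1"

definition scheme ::
  "(nat \<Rightarrow> 't) set \<Rightarrow> nat \<Rightarrow> ((nat \<Rightarrow> 't) \<Rightarrow> nat \<Rightarrow> real) \<Rightarrow> bool" where
  "scheme Theta k phi \<longleftrightarrow>
     (\<forall>th\<in>Theta. (\<forall>s<k. 0 \<le> phi th s) \<and> (\<Sum>s<k. phi th s) = 1)"

definition sig_prob ::
  "(nat \<Rightarrow> 't) set \<Rightarrow> ((nat \<Rightarrow> 't) \<Rightarrow> real) \<Rightarrow> ((nat \<Rightarrow> 't) \<Rightarrow> nat \<Rightarrow> real) \<Rightarrow> nat \<Rightarrow> real" where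
  "sig_prob Theta q phi s = (\<Sum>th\<in>Theta. q th * phi th s)"

definition joint_val ::
  "(nat \<Rightarrow> 't) set \<Rightarrow> ((nat \<Rightarrow> 't) \<Rightarrow> real) \<Rightarrow> ((nat \<Rightarrow> 't) \<Rightarrow> nat \<Rightarrow> real)
    \<Rightarrow> nat \<Rightarrow> nat \<Rightarrow> ('t \<Rightarrow> real) \<Rightarrow> real" where
  "joint_val Theta q phi s i f = (\<Sum>th\<in>Theta. q th * phi th s * f (th i))"

definition cond_exp ::
  "(nat \<Rightarrow> 't) set \<Rightarrow> ((nat \<Rightarrow> 't) \<Rightarrow> real) \<Rightarrow> ((nat \<Rightarrow> 't) \<Rightarrow> nat \<Rightarrow> real)
    \<Rightarrow> nat \<Rightarrow> nat \<Rightarrow> ('t \<Rightarrow> real) \<Rightarrow> real" where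
  "cond_exp Theta q phi s i f = joint_val Theta q phi s i f / sig_prob Theta q phi s"

text \<open>For a signal of positive probability, maximising the unnormalised joint value is
  the same as maximising the conditional expectation; for signals of probability 0
  all actions are best responses and the signal contributes 0 anyway.\<close>
definition best_resp ::
  "nat \<Rightarrow> (nat \<Rightarrow> 't) set \<Rightarrow> ((nat \<Rightarrow> 't) \<Rightarrow> real) \<Rightarrow> ('t \<Rightarrow> real)
    \<Rightarrow> ((nat \<Rightarrow> 't) \<Rightarrow> nat \<Rightarrow> real) \<Rightarrow> nat \<Rightarrow> nat set" where
  "best_resp n Theta q rho phi s =
     {i\<in>{1..n}. \<forall>j\<in>{1..n}. joint_val Theta q phi s j rho \<le> joint_val Theta q phi s i rho}"

text \<open>Sender's expected utility: for each signal the receiver picks a best response,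
  ties broken in favour of the sender (remaining ties do not affect the sender).\<close>
definition sender_util ::
  "nat \<Rightarrow> nat \<Rightarrow> (nat \<Rightarrow> 't) set \<Rightarrow> ((nat \<Rightarrow> 't) \<Rightarrow> real) \<Rightarrow> ('t \<Rightarrow> real) \<Rightarrow> ('t \<Rightarrow> real)
    \<Rightarrow> ((nat \<Rightarrow> 't) \<Rightarrow> nat \<Rightarrow> real) \<Rightarrow> real" where
  "sender_util n k Theta q rho xi phi =
     (\<Sum>s<k. Max ((\<lambda>i. joint_val Theta q phi s i xi) ` best_resp n Theta q rho phi s))"

definition optimal_scheme ::
  "nat \<Rightarrow> nat \<Rightarrow> (nat \<Rightarrow> 't) set \<Rightarrow> ((nat \<Rightarrow> 't) \<Rightarrow> real) \<Rightarrow> ('t \<Rightarrow> real) \<Rightarrow> ('t \<Rightarrow> real)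
    \<Rightarrow> ((nat \<Rightarrow> 't) \<Rightarrow> nat \<Rightarrow> real) \<Rightarrow> bool" where
  "optimal_scheme n k Theta q rho xi phi \<longleftrightarrow>
     scheme Theta k phi \<and>
     (\<forall>psi. scheme Theta k psi \<longrightarrow>
        sender_util n k Theta q rho xi psi \<le> sender_util n k Theta q rho xi phi)"

text \<open>A direct scheme: each signal s < k is identified with the action rec s it
  recommends; persuasive: for each signal of positive probability the recommended
  action maximises the receiver's conditional expected utility.\<close>
definition direct_persuasive ::
  "nat \<Rightarrow> nat \<Rightarrow> (nat \<Rightarrow> 't) set \<Rightarrow> ((nat \<Rightarrow> 't) \<Rightarrow> real) \<Rightarrow> ('t \<Rightarrow> real)
    \<Rightarrow> ((nat \<Rightarrow> 't) \<Rightarrow> nat \<Rightarrow> real) \<Rightarrow> (nat \<Rightarrow> nat) \<Rightarrow> bool" where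
  "direct_persuasive n k Theta q rho phi rec \<longleftrightarrow>
     (\<forall>s<k. rec s \<in> {1..n}) \<and>
     (\<forall>s<k. sig_prob Theta q phi s > 0 \<longrightarrow>
        (\<forall>j\<in>{1..n}. cond_exp Theta q phi s j rho \<le> cond_exp Theta q phi s (rec s) rho))"

definition symmetric_inst ::
  "nat \<Rightarrow> (nat \<Rightarrow> 't) set \<Rightarrow> ((nat \<Rightarrow> 't) \<Rightarrow> real) \<Rightarrow> bool" where
  "symmetric_inst n Theta q \<longleftrightarrow>
     (\<forall>p th. p permutes {1..n} \<longrightarrow>
        (if th \<in> Theta then q th else 0) = (if th \<circ> p \<in> Theta then q (th \<circ> p) else 0))"

end

theory Submission
  imports Defs "HOL-Analysis.Analysis"
begin

text \<open>Given a scheme, let the receiver follow sender-preferred best responses a.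
  Merging all signals that recommend the same action keeps every recommendation obedient and the
  sender's value unchanged; the signals freed this way are never sent and may recommend any
  unused action. So it suffices to maximise over the finitely many injective recommendations,
  and for each of them the obedient schemes form a compact set (in the product topology) on
  which the sender's value is continuous, so a maximiser exists. In a symmetric instance,
  relabelling the coordinates of the state by a permutation of the actions maps optimal schemes
  to optimal schemes, and a suitable permutation moves the k recommended actions onto 1..k.\<close>

text \<open>Persuasiveness in terms of the unnormalised joint values, so that it is also
  meaningful for signals sent with probability 0.\<close>

definition obedient ::
  "nat \<Rightarrow> nat \<Rightarrow> (nat \<Rightarrow> 't) set \<Rightarrow> ((nat \<Rightarrow> 't) \<Rightarrow> real) \<Rightarrow> ('t \<Rightarrow> real)
    \<Rightarrow> ((nat \<Rightarrow> 't) \<Rightarrow> nat \<Rightarrow> real) \<Rightarrow> (nat \<Rightarrow> nat) \<Rightarrow> bool" where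
  "obedient n k Theta q rho phi a \<longleftrightarrow>
     (\<forall>s<k. \<forall>j\<in>{1..n}. joint_val Theta q phi s j rho \<le> joint_val Theta q phi s (a s) rho)"

definition rec_value ::
  "nat \<Rightarrow> (nat \<Rightarrow> 't) set \<Rightarrow> ((nat \<Rightarrow> 't) \<Rightarrow> real) \<Rightarrow> ('t \<Rightarrow> real)
    \<Rightarrow> ((nat \<Rightarrow> 't) \<Rightarrow> nat \<Rightarrow> real) \<Rightarrow> (nat \<Rightarrow> nat) \<Rightarrow> real" where
  "rec_value k Theta q xi phi a = (\<Sum>s<k. joint_val Theta q phi s (a s) xi)"

lemma obedient_restrict:
  "obedient n k Theta q rho phi (restrict a {..<k}) = obedient n k Theta q rho phi a"
  by (simp add: obedient_def)

lemma rec_value_restrict: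
  "rec_value k Theta q xi phi (restrict a {..<k}) = rec_value k Theta q xi phi a"
  by (simp add: rec_value_def)

lemma obedient_imp_direct_persuasive:
  assumes "\<forall>s<k. a s \<in> {1..n}" and "obedient n k Theta q rho phi a"
  shows "direct_persuasive n k Theta q rho phi a"
  using assms by (auto simp: direct_persuasive_def cond_exp_def obedient_def intro: divide_right_mono)

lemma rec_value_le_sender_util:
  assumes "\<forall>s<k. a s \<in> {1..n}" and "obedient n k Theta q rho phi a"
  shows "rec_value k Theta q xi phi a \<le> sender_util n k Theta q rho xi phi"
  unfolding rec_value_def sender_util_def
proof (rule sum_mono)
  fix s assume "s \<in> {..<k}"
  then have "a s \<in> best_resp n Theta q rho phi s"
    using assms by (auto simp: best_resp_def obedient_def)
  then show "joint_val Theta q phi s (a s) xi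
     \<le> Max ((\<lambda>i. joint_val Theta q phi s i xi) ` best_resp n Theta q rho phi s)"
    by (intro Max_ge) (auto simp: best_resp_def)
qed

lemma best_resp_nonempty:
  assumes "1 \<le> n"
  shows "best_resp n Theta q rho phi s \<noteq> {}"
proof -
  let ?u = "\<lambda>j. joint_val Theta q phi s j rho"
  have "Max (?u ` {1..n}) \<in> ?u ` {1..n}"
    using assms by (intro Max_in) auto
  then obtain i where "i \<in> {1..n}" "?u i = Max (?u ` {1..n})"
    by auto
  then have "i \<in> best_resp n Theta q rho phi s"
    by (auto simp: best_resp_def)
  then show ?thesis by auto
qed

lemma sender_util_attained:
  assumes "1 \<le> n"
  obtains a where "\<forall>s<k. a s \<in> {1..n}" "obedient n k Theta q rho phi a"
    "rec_value k Theta q xi phi a = sender_util n k Theta q rho xi phi"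
proof -
  let ?B = "best_resp n Theta q rho phi"
  let ?v = "\<lambda>s i. joint_val Theta q phi s i xi"
  have "\<forall>s. \<exists>i. i \<in> ?B s \<and> ?v s i = Max (?v s ` ?B s)"
  proof
    fix s
    have "Max (?v s ` ?B s) \<in> ?v s ` ?B s"
      using best_resp_nonempty[OF assms] by (intro Max_in) (auto simp: best_resp_def)
    then show "\<exists>i. i \<in> ?B s \<and> ?v s i = Max (?v s ` ?B s)"
      by (metis imageE)
  qed
  from choice[OF this] obtain a where a: "\<And>s. a s \<in> ?B s" "\<And>s. ?v s (a s) = Max (?v s ` ?B s)"
    by blast
  show ?thesis
  proof
    show "\<forall>s<k. a s \<in> {1..n}" "obedient n k Theta q rho phi a"
      using a(1) by (auto simp: obedient_def best_resp_def)
    show "rec_value k Theta q xi phi a = sender_util n k Theta q rho xi phi"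
      unfolding rec_value_def sender_util_def a(2) ..
  qed
qed

lemma scheme_merge:
  assumes "scheme Theta k phi" and "\<forall>s<k. c s < k"
  shows "scheme Theta k (\<lambda>th s. \<Sum>s'\<in>{s'. s' \<in> {..<k} \<and> c s' = s}. phi th s')"
proof -
  have "(\<Sum>s<k. \<Sum>s'\<in>{s'. s' \<in> {..<k} \<and> c s' = s}. phi th s') = (\<Sum>s<k. phi th s)" for th
    using assms(2) by (intro sum.group) auto
  then show ?thesis
    using assms(1) by (auto simp: scheme_def intro!: sum_nonneg)
qed

lemma joint_val_merge:
  "joint_val Theta q (\<lambda>th s. \<Sum>s'\<in>S s. phi th s') s i f = (\<Sum>s'\<in>S s. joint_val Theta q phi s' i f)"
  unfolding joint_val_def
  by (simp add: sum_distrib_left sum_distrib_right mult.assoc sum.swap[of _ Theta])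

lemma inj_on_extend:
  assumes "finite K" "finite N" "R \<subseteq> K" "inj_on a R" "a ` R \<subseteq> N" "card K \<le> card N"
  obtains b where "inj_on b K" "b ` K \<subseteq> N" "\<forall>s\<in>R. b s = a s"
proof -
  have "card (K - R) = card K - card (a ` R)"
    using assms by (simp add: card_Diff_subset finite_subset card_image)
  also have "\<dots> \<le> card (N - a ` R)"
    using assms by (simp add: card_Diff_subset finite_subset)
  finally obtain g where g: "g ` (K - R) \<subseteq> N - a ` R" "inj_on g (K - R)"
    using card_le_inj[of "K - R" "N - a ` R"] assms by auto
  define b where "b s = (if s \<in> R then a s else g s)" for s
  have "inj_on b (R \<union> (K - R))"
    unfolding inj_on_Un using assms(4) g by (auto simp: b_def inj_on_def)
  moreover have "R \<union> (K - R) = K" using assms(3) by auto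
  moreover have "b ` K \<subseteq> N"
    using assms(5) g(1) by (auto simp: b_def)
  ultimately show ?thesis
    using that[of b] by (auto simp: b_def)
qed

lemma obedient_injective_exists:
  assumes phi: "scheme Theta k phi" and a: "\<forall>s<k. a s \<in> {1..n}"
    and obedient: "obedient n k Theta q rho phi a" and "k \<le> n"
  obtains psi b where "scheme Theta k psi" "\<forall>s<k. b s \<in> {1..n}" "inj_on b {..<k}"
    "obedient n k Theta q rho psi b" "rec_value k Theta q xi psi b = rec_value k Theta q xi phi a"
proof -
  \<comment> \<open>Signal s is merged into rep s, the first signal recommending the same action.\<close>
  define rep where "rep s = (LEAST s'. a s' = a s)" for s
  have rep_le: "rep s \<le> s" for s
    unfolding rep_def by (rule Least_le) (rule refl)
  have a_rep: "a (rep s) = a s" for s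
    unfolding rep_def by (rule LeastI) (rule refl)
  have rep_rep: "rep (rep s) = rep s" for s
    unfolding rep_def[of "rep s"] a_rep by (simp add: rep_def)
  have rep_less: "\<forall>s<k. rep s < k"
    using rep_le le_less_trans by blast
  define R where "R = {s\<in>{..<k}. rep s = s}"
  define fiber where "fiber s = {s'. s' \<in> {..<k} \<and> rep s' = s}" for s
  have "inj_on a R"
  proof (rule inj_onI)
    fix x y assume "x \<in> R" "y \<in> R" "a x = a y"
    then have "rep x = rep y" by (simp add: rep_def)
    then show "x = y" using \<open>x \<in> R\<close> \<open>y \<in> R\<close> by (simp add: R_def)
  qed
  moreover have "a ` R \<subseteq> {1..n}"
    using a by (auto simp: R_def)
  ultimately obtain b where b: "inj_on b {..<k}" "b ` {..<k} \<subseteq> {1..n}" "\<forall>s\<in>R. b s = a s"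
    using inj_on_extend[of "{..<k}" "{1..n}" R a] \<open>k \<le> n\<close> by (auto simp: R_def)
  have b_fiber: "b s = a s'" if "s' \<in> fiber s" for s s'
  proof -
    have "s \<in> R"
      using that rep_less rep_rep by (auto simp: fiber_def R_def)
    then show ?thesis
      using that b(3) a_rep[of s'] by (auto simp: fiber_def)
  qed
  define psi where "psi th s = (\<Sum>s'\<in>fiber s. phi th s')" for th s
  have jv_psi: "joint_val Theta q psi s i f = (\<Sum>s'\<in>fiber s. joint_val Theta q phi s' i f)" for s i f
    unfolding psi_def by (rule joint_val_merge)
  have "scheme Theta k psi"
    unfolding psi_def fiber_def by (rule scheme_merge[OF phi rep_less])
  moreover have "obedient n k Theta q rho psi b"
    unfolding obedient_def jv_psi
  proof (intro allI impI ballI sum_mono)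
    fix s j s' assume "j \<in> {1..n}" "s' \<in> fiber s"
    then show "joint_val Theta q phi s' j rho \<le> joint_val Theta q phi s' (b s) rho"
      using obedient b_fiber by (auto simp: obedient_def fiber_def)
  qed
  moreover have "rec_value k Theta q xi psi b = rec_value k Theta q xi phi a"
  proof -
    have "rec_value k Theta q xi psi b = (\<Sum>s<k. \<Sum>s'\<in>fiber s. joint_val Theta q phi s' (a s') xi)"
      unfolding rec_value_def jv_psi by (intro sum.cong refl) (simp add: b_fiber)
    also have "\<dots> = rec_value k Theta q xi phi a"
      unfolding rec_value_def fiber_def using rep_less by (intro sum.group) auto
    finally show ?thesis .
  qed
  moreover have "\<forall>s<k. b s \<in> {1..n}"
    using b(2) by auto
  ultimately show ?thesis
    using that b(1) by blast
qed

lemma compact_PiE_UNIV: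
  fixes S :: "'a \<Rightarrow> 'b::topological_space set"
  assumes "\<And>i. compact (S i)"
  shows "compact (PiE UNIV S)"
  using compactin_PiE[of "\<lambda>i. euclidean" UNIV S] assms
  by (simp add: euclidean_product_topology)

lemma continuous_on_apply2: "continuous_on A (\<lambda>phi::'a \<Rightarrow> 'b \<Rightarrow> real. phi x y)"
proof -
  have "continuous_on UNIV ((\<lambda>g::'b \<Rightarrow> real. g y) \<circ> (\<lambda>phi::'a \<Rightarrow> 'b \<Rightarrow> real. phi x))"
    by (intro continuous_on_compose continuous_on_subset[OF continuous_on_product_coordinates])
      auto
  then show ?thesis
    using continuous_on_subset[of UNIV _ A] by (simp add: o_def)
qed

lemma continuous_on_joint_val: "continuous_on A (\<lambda>phi. joint_val Theta q phi s i f)"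
  unfolding joint_val_def by (intro continuous_intros continuous_on_apply2)

lemma continuous_on_rec_value: "continuous_on A (\<lambda>phi. rec_value k Theta q xi phi a)"
  unfolding rec_value_def by (intro continuous_intros continuous_on_joint_val)

lemma closed_obedient: "closed {phi. obedient n k Theta q rho phi a}"
proof -
  have "{phi. obedient n k Theta q rho phi a} = (\<Inter>s\<in>{..<k}. \<Inter>j\<in>{1..n}.
      {phi. joint_val Theta q phi s j rho \<le> joint_val Theta q phi s (a s) rho})"
    by (auto simp: obedient_def)
  then show ?thesis
    by (simp add: closed_INT closed_Collect_le continuous_on_joint_val)
qed

definition clip_scheme ::
  "(nat \<Rightarrow> 't) set \<Rightarrow> nat \<Rightarrow> ((nat \<Rightarrow> 't) \<Rightarrow> nat \<Rightarrow> real) \<Rightarrow> (nat \<Rightarrow> 't) \<Rightarrow> nat \<Rightarrow> real" where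
  "clip_scheme Theta k phi th s = (if th \<in> Theta \<and> s < k then phi th s else 0)"

definition clipped_schemes :: "(nat \<Rightarrow> 't) set \<Rightarrow> nat \<Rightarrow> ((nat \<Rightarrow> 't) \<Rightarrow> nat \<Rightarrow> real) set" where
  "clipped_schemes Theta k =
     (PiE UNIV (\<lambda>th. PiE UNIV (\<lambda>s. if th \<in> Theta \<and> s < k then {0..1} else {0})))
     \<inter> (\<Inter>th\<in>Theta. {phi. (\<Sum>s<k. phi th s) = 1})"

lemma joint_val_clip_scheme:
  "s < k \<Longrightarrow> joint_val Theta q (clip_scheme Theta k phi) s i f = joint_val Theta q phi s i f"
  unfolding joint_val_def clip_scheme_def by (intro sum.cong) auto

lemma obedient_clip_scheme:
  "obedient n k Theta q rho (clip_scheme Theta k phi) a = obedient n k Theta q rho phi a"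
  by (simp add: obedient_def joint_val_clip_scheme)

lemma rec_value_clip_scheme:
  "rec_value k Theta q xi (clip_scheme Theta k phi) a = rec_value k Theta q xi phi a"
  by (simp add: rec_value_def joint_val_clip_scheme)

lemma mem_clipped_schemes:
  "phi \<in> clipped_schemes Theta k \<longleftrightarrow>
     (\<forall>th s. phi th s \<in> (if th \<in> Theta \<and> s < k then {0..1} else {0}))
     \<and> (\<forall>th\<in>Theta. (\<Sum>s<k. phi th s) = 1)"
  by (simp add: clipped_schemes_def PiE_UNIV_domain Pi_iff)

lemma clip_scheme_in_clipped_schemes:
  assumes "scheme Theta k phi"
  shows "clip_scheme Theta k phi \<in> clipped_schemes Theta k"
proof -
  have "phi th s \<le> 1" if "th \<in> Theta" "s < k" for th s
    using assms that member_le_sum[of s "{..<k}" "phi th"] by (auto simp: scheme_def)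
  then show ?thesis
    using assms unfolding mem_clipped_schemes scheme_def clip_scheme_def by simp
qed

lemma clipped_schemes_scheme:
  assumes "phi \<in> clipped_schemes Theta k"
  shows "scheme Theta k phi"
  using assms unfolding mem_clipped_schemes scheme_def by (metis atLeastAtMost_iff)

lemma compact_clipped_schemes: "compact (clipped_schemes Theta k)"
  unfolding clipped_schemes_def
  by (intro compact_Int_closed compact_PiE_UNIV closed_INT ballI closed_Collect_eq
      continuous_intros continuous_on_apply2) auto

lemma finite_family_attains_sup:
  fixes f :: "'i \<Rightarrow> 'a::topological_space \<Rightarrow> real"
  assumes "finite I" "\<And>i. i \<in> I \<Longrightarrow> compact (C i)" "\<And>i. i \<in> I \<Longrightarrow> continuous_on (C i) (f i)"
    and "\<exists>i\<in>I. C i \<noteq> {}"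
  shows "\<exists>i\<in>I. \<exists>x\<in>C i. \<forall>j\<in>I. \<forall>y\<in>C j. f j y \<le> f i x"
proof -
  define J where "J = {i\<in>I. C i \<noteq> {}}"
  have "\<forall>i\<in>J. \<exists>x. x \<in> C i \<and> (\<forall>y\<in>C i. f i y \<le> f i x)"
  proof
    fix i assume "i \<in> J"
    then have "\<exists>x\<in>C i. \<forall>y\<in>C i. f i y \<le> f i x"
      using assms(2,3) by (intro continuous_attains_sup) (auto simp: J_def)
    then show "\<exists>x. x \<in> C i \<and> (\<forall>y\<in>C i. f i y \<le> f i x)"
      by blast
  qed
  from bchoice[OF this] obtain m where m: "\<forall>i\<in>J. m i \<in> C i \<and> (\<forall>y\<in>C i. f i y \<le> f i (m i))"
    by blast
  let ?M = "Max ((\<lambda>j. f j (m j)) ` J)"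
  have "finite J" "J \<noteq> {}"
    using assms(1,4) by (auto simp: J_def)
  then have "?M \<in> (\<lambda>j. f j (m j)) ` J"
    by (intro Max_in) auto
  then obtain i where i: "i \<in> J" "f i (m i) = ?M"
    by (metis imageE)
  have "f j y \<le> f i (m i)" if "j \<in> I" "y \<in> C j" for j y
  proof -
    have "j \<in> J" using that by (auto simp: J_def)
    then have "f j (m j) \<le> ?M"
      using \<open>finite J\<close> by (intro Max_ge) auto
    moreover have "f j y \<le> f j (m j)"
      using m \<open>j \<in> J\<close> that(2) by blast
    ultimately show ?thesis
      using i(2) by linarith
  qed
  moreover have "i \<in> I" "m i \<in> C i"
    using i(1) m by (auto simp: J_def)
  ultimately show ?thesis
    by blast
qed

lemma sender_util_attained_injective:
  assumes "1 \<le> n" "k \<le> n" and psi: "scheme Theta k psi"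
  obtains b phi where "b \<in> {..<k} \<rightarrow>\<^sub>E {1..n}" "inj_on b {..<k}" "phi \<in> clipped_schemes Theta k"
    "obedient n k Theta q rho phi b" "rec_value k Theta q xi phi b = sender_util n k Theta q rho xi psi"
proof -
  obtain a where a: "\<forall>s<k. a s \<in> {1..n}" "obedient n k Theta q rho psi a"
    "rec_value k Theta q xi psi a = sender_util n k Theta q rho xi psi"
    by (rule sender_util_attained[OF assms(1)])
  obtain psi' b where b: "scheme Theta k psi'" "\<forall>s<k. b s \<in> {1..n}" "inj_on b {..<k}"
    "obedient n k Theta q rho psi' b" "rec_value k Theta q xi psi' b = rec_value k Theta q xi psi a"
    by (rule obedient_injective_exists[OF psi a(1,2) assms(2)])
  show ?thesis
  proof
    show "restrict b {..<k} \<in> {..<k} \<rightarrow>\<^sub>E {1..n}" "inj_on (restrict b {..<k}) {..<k}"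
      using b(2,3) by (simp_all add: inj_on_def)
    show "clip_scheme Theta k psi' \<in> clipped_schemes Theta k"
      using clip_scheme_in_clipped_schemes[OF b(1)] .
    show "obedient n k Theta q rho (clip_scheme Theta k psi') (restrict b {..<k})"
      using b(4) by (simp add: obedient_clip_scheme obedient_restrict)
    show "rec_value k Theta q xi (clip_scheme Theta k psi') (restrict b {..<k})
        = sender_util n k Theta q rho xi psi"
      using a(3) b(5) by (simp add: rec_value_clip_scheme rec_value_restrict)
  qed
qed

lemma optimal_obedient_injective_exists:
  fixes Theta :: "(nat \<Rightarrow> 't) set"
  assumes "1 \<le> k" and "k \<le> n"
  obtains phi b where "optimal_scheme n k Theta q rho xi phi" "\<forall>s<k. b s \<in> {1..n}"
    "inj_on b {..<k}" "obedient n k Theta q rho phi b"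
    "rec_value k Theta q xi phi b = sender_util n k Theta q rho xi phi"
proof -
  define A where "A = {b \<in> {..<k} \<rightarrow>\<^sub>E {1..n}. inj_on b {..<k}}"
  define C where "C b = clipped_schemes Theta k \<inter> {phi. obedient n k Theta q rho phi b}" for b
  have reduce: "\<exists>b\<in>A. \<exists>phi\<in>C b. sender_util n k Theta q rho xi psi = rec_value k Theta q xi phi b"
    if psi: "scheme Theta k psi" for psi
  proof -
    have "1 \<le> n" using assms by simp
    obtain b phi where b: "b \<in> {..<k} \<rightarrow>\<^sub>E {1..n}" "inj_on b {..<k}"
      and phi: "phi \<in> clipped_schemes Theta k" "obedient n k Theta q rho phi b"
      and eq: "rec_value k Theta q xi phi b = sender_util n k Theta q rho xi psi"
      by (rule sender_util_attained_injective[OF \<open>1 \<le> n\<close> assms(2) psi])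
    show ?thesis
    proof (intro bexI)
      show "b \<in> A" using b by (simp add: A_def)
      show "phi \<in> C b" using phi by (simp add: C_def)
      show "sender_util n k Theta q rho xi psi = rec_value k Theta q xi phi b" using eq by simp
    qed
  qed
  have "scheme Theta k (\<lambda>th s. if s = 0 then 1 else 0)"
    using assms(1) by (simp add: scheme_def)
  from reduce[OF this] have nonempty: "\<exists>b\<in>A. C b \<noteq> {}"
    by blast
  have "finite A"
  proof (rule finite_subset)
    show "A \<subseteq> {..<k} \<rightarrow>\<^sub>E {1..n}"
      by (auto simp: A_def)
  qed (simp add: finite_PiE)
  moreover have "\<And>b. b \<in> A \<Longrightarrow> compact (C b)"
    unfolding C_def by (intro compact_Int_closed compact_clipped_schemes closed_obedient)
  ultimately have "\<exists>b\<in>A. \<exists>phi\<in>C b. \<forall>b'\<in>A. \<forall>phi'\<in>C b'.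
      rec_value k Theta q xi phi' b' \<le> rec_value k Theta q xi phi b"
    using nonempty continuous_on_rec_value
    by (intro finite_family_attains_sup[of A C "\<lambda>b phi. rec_value k Theta q xi phi b"])
  then obtain b phi where b: "b \<in> A" and phi: "phi \<in> C b"
    and max: "\<forall>b'\<in>A. \<forall>phi'\<in>C b'. rec_value k Theta q xi phi' b' \<le> rec_value k Theta q xi phi b"
    by blast
  have b_range: "\<forall>s<k. b s \<in> {1..n}" and b_inj: "inj_on b {..<k}"
    using b by (simp_all add: A_def PiE_iff)
  have obedient: "obedient n k Theta q rho phi b" and scheme: "scheme Theta k phi"
    using phi clipped_schemes_scheme[of phi] by (simp_all add: C_def)
  have upper: "sender_util n k Theta q rho xi psi \<le> rec_value k Theta q xi phi b"
    if psi: "scheme Theta k psi" for psi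
  proof -
    obtain b' phi' where "b' \<in> A" "phi' \<in> C b'"
      "sender_util n k Theta q rho xi psi = rec_value k Theta q xi phi' b'"
      using reduce[OF psi] by blast
    moreover have "rec_value k Theta q xi phi' b' \<le> rec_value k Theta q xi phi b"
      using max \<open>b' \<in> A\<close> \<open>phi' \<in> C b'\<close> by blast
    ultimately show ?thesis
      by linarith
  qed
  have lower: "rec_value k Theta q xi phi b \<le> sender_util n k Theta q rho xi phi"
    by (rule rec_value_le_sender_util[OF b_range obedient])
  have "optimal_scheme n k Theta q rho xi phi"
    unfolding optimal_scheme_def using scheme upper lower by fastforce
  moreover have "rec_value k Theta q xi phi b = sender_util n k Theta q rho xi phi"
    using upper[OF scheme] lower by linarith
  ultimately show ?thesis
    by (rule that[OF _ b_range b_inj obedient])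
qed

lemma permutes_image_exists:
  assumes "finite N" "R \<subseteq> N" "T \<subseteq> N" "card R = card T"
  obtains p where "p permutes N" "p ` R = T"
proof -
  have fin: "finite R" "finite T" "finite (N - R)" "finite (N - T)"
    using assms finite_subset by auto
  obtain f where f: "bij_betw f R T"
    using finite_same_card_bij[OF fin(1,2) assms(4)] by blast
  have "card (N - R) = card (N - T)"
    using assms fin by (simp add: card_Diff_subset)
  then obtain g where g: "bij_betw g (N - R) (N - T)"
    using finite_same_card_bij[OF fin(3,4)] by blast
  define p where "p x = (if x \<in> R then f x else if x \<in> N then g x else x)" for x
  have pR: "bij_betw p R T"
    using f by (rule bij_betw_cong[THEN iffD1, rotated]) (simp add: p_def)
  have "bij_betw p (N - R) (N - T)"
    using g by (rule bij_betw_cong[THEN iffD1, rotated]) (simp add: p_def)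
  then have "bij_betw p (R \<union> (N - R)) (T \<union> (N - T))"
    by (intro bij_betw_combine[OF pR]) auto
  then have "bij_betw p N N"
    using assms(2,3) by (simp add: Un_absorb1 Un_Diff_cancel)
  then have "p permutes N"
    by (rule bij_imp_permutes) (use assms(2) in \<open>auto simp: p_def\<close>)
  then show ?thesis
    using that pR by (simp add: bij_betw_def)
qed

text \<open>By symmetry, states whose permutation leaves Theta have prior 0; sending signal 0
  there only keeps the result a scheme.\<close>

definition permute_scheme ::
  "(nat \<Rightarrow> 't) set \<Rightarrow> (nat \<Rightarrow> nat) \<Rightarrow> ((nat \<Rightarrow> 't) \<Rightarrow> nat \<Rightarrow> real) \<Rightarrow> (nat \<Rightarrow> 't) \<Rightarrow> nat \<Rightarrow> real" where
  "permute_scheme Theta p phi th s =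
     (if th \<circ> p \<in> Theta then phi (th \<circ> p) s else if s = 0 then 1 else 0)"

lemma scheme_permute_scheme:
  assumes "1 \<le> k" and "scheme Theta k phi"
  shows "scheme Theta k (permute_scheme Theta p phi)"
  unfolding scheme_def
proof (intro ballI conjI allI impI)
  fix th s assume "th \<in> Theta" "s < k"
  then show "0 \<le> permute_scheme Theta p phi th s"
    using assms(2) by (auto simp: scheme_def permute_scheme_def)
next
  fix th assume "th \<in> Theta"
  show "(\<Sum>s<k. permute_scheme Theta p phi th s) = 1"
    using assms by (cases "th \<circ> p \<in> Theta") (auto simp: scheme_def permute_scheme_def)
qed

lemma symmetric_inst_permute:
  assumes "symmetric_inst n Theta q" "p permutes {1..n}" "th \<in> Theta" "q th \<noteq> 0"
  shows "th \<circ> p \<in> Theta" and "q (th \<circ> p) = q th"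
proof -
  have "(if th \<in> Theta then q th else 0) = (if th \<circ> p \<in> Theta then q (th \<circ> p) else 0)"
    using assms(1,2) unfolding symmetric_inst_def by blast
  then show "th \<circ> p \<in> Theta" "q (th \<circ> p) = q th"
    using assms(3,4) by (auto split: if_splits)
qed

lemma joint_val_permute_scheme:
  fixes Theta :: "(nat \<Rightarrow> 't) set"
  assumes "bp_instance n Theta q" and "symmetric_inst n Theta q" and p: "p permutes {1..n}"
  shows "joint_val Theta q (permute_scheme Theta p phi) s i f = joint_val Theta q phi s (inv p i) f"
proof -
  define P where "P = {th\<in>Theta. q th \<noteq> 0}"
  define h where "h th = th \<circ> p" for th :: "nat \<Rightarrow> 't"
  have "finite Theta"
    using assms(1) by (simp add: bp_instance_def)
  then have "finite P"
    by (simp add: P_def)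
  have hP: "h th \<in> Theta" "q (h th) = q th" if "th \<in> P" for th
    using symmetric_inst_permute[OF assms(2) p] that by (auto simp: P_def h_def)
  have h_apply: "h th (inv p j) = th j" for th j
    using permutes_inverses(1)[OF p] by (simp add: h_def)
  have "inj_on h P"
  proof (rule inj_onI, rule ext)
    fix x y j assume "h x = h y"
    then show "x j = y j"
      using h_apply[of x j] h_apply[of y j] by simp
  qed
  moreover have "h ` P \<subseteq> P"
    using hP by (auto simp: P_def)
  ultimately have "h ` P = P"
    using endo_inj_surj[OF \<open>finite P\<close>] by blast
  have "joint_val Theta q (permute_scheme Theta p phi) s i f
      = (\<Sum>th\<in>P. q th * permute_scheme Theta p phi th s * f (th i))"
    unfolding joint_val_def using \<open>finite Theta\<close> by (intro sum.mono_neutral_right) (auto simp: P_def)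
  also have "\<dots> = (\<Sum>th\<in>P. q (h th) * phi (h th) s * f (h th (inv p i)))"
    using hP by (intro sum.cong refl) (simp add: permute_scheme_def h_def permutes_inverses(1)[OF p])
  also have "\<dots> = (\<Sum>th\<in>h ` P. q th * phi th s * f (th (inv p i)))"
    by (simp add: sum.reindex[OF \<open>inj_on h P\<close>])
  also have "\<dots> = joint_val Theta q phi s (inv p i) f"
    unfolding \<open>h ` P = P\<close> joint_val_def using \<open>finite Theta\<close>
    by (intro sum.mono_neutral_left) (auto simp: P_def)
  finally show ?thesis .
qed

lemma optimal_permute_scheme:
  fixes Theta :: "(nat \<Rightarrow> 't) set"
  assumes bp: "bp_instance n Theta q" and sym: "symmetric_inst n Theta q"
    and p: "p permutes {1..n}" and "1 \<le> k"
    and opt: "optimal_scheme n k Theta q rho xi phi" and b: "\<forall>s<k. b s \<in> {1..n}"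
    and obedient: "obedient n k Theta q rho phi b"
    and util: "rec_value k Theta q xi phi b = sender_util n k Theta q rho xi phi"
  shows "optimal_scheme n k Theta q rho xi (permute_scheme Theta p phi)"
    and "obedient n k Theta q rho (permute_scheme Theta p phi) (p \<circ> b)"
proof -
  let ?psi = "permute_scheme Theta p phi"
  have jv: "joint_val Theta q ?psi s i f = joint_val Theta q phi s (inv p i) f" for s i f
    by (rule joint_val_permute_scheme[OF bp sym p])
  have inv_p: "inv p (p x) = x" for x
    using permutes_inverses(2)[OF p] .
  have pb: "\<forall>s<k. (p \<circ> b) s \<in> {1..n}"
    using b permutes_in_image[OF p] by simp
  show obedient_psi: "obedient n k Theta q rho ?psi (p \<circ> b)"
    using obedient permutes_in_image[OF permutes_inv[OF p]]
    by (simp add: obedient_def jv inv_p)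
  have "rec_value k Theta q xi ?psi (p \<circ> b) = rec_value k Theta q xi phi b"
    by (simp add: rec_value_def jv inv_p)
  then have "sender_util n k Theta q rho xi phi \<le> sender_util n k Theta q rho xi ?psi"
    using rec_value_le_sender_util[OF pb obedient_psi, of xi] util by simp
  moreover have "scheme Theta k ?psi"
    using opt by (intro scheme_permute_scheme[OF \<open>1 \<le> k\<close>]) (simp add: optimal_scheme_def)
  ultimately show "optimal_scheme n k Theta q rho xi ?psi"
    using opt unfolding optimal_scheme_def by (meson order_trans)
qed

lemma symmetric_optimal_recommends_first_actions:
  fixes Theta :: "(nat \<Rightarrow> 't) set"
  assumes bp: "bp_instance n Theta q" and sym: "symmetric_inst n Theta q" and "1 \<le> k" "k \<le> n"
    and opt: "optimal_scheme n k Theta q rho xi phi" and b: "\<forall>s<k. b s \<in> {1..n}"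
    and inj: "inj_on b {..<k}" and obedient: "obedient n k Theta q rho phi b"
    and util: "rec_value k Theta q xi phi b = sender_util n k Theta q rho xi phi"
  obtains psi rec where "optimal_scheme n k Theta q rho xi psi" "\<forall>s<k. rec s \<in> {1..n}"
    "inj_on rec {..<k}" "obedient n k Theta q rho psi rec" "rec ` {..<k} = {1..k}"
proof -
  have card: "card (b ` {..<k}) = card {1..k}"
    using card_image[OF inj] by simp
  have "b ` {..<k} \<subseteq> {1..n}" "{1..k} \<subseteq> {1..n}"
    using b assms(4) by auto
  then obtain p where p: "p permutes {1..n}" "p ` b ` {..<k} = {1..k}"
    using permutes_image_exists[OF finite_atLeastAtMost _ _ card] by blast
  show ?thesis
  proof
    show "optimal_scheme n k Theta q rho xi (permute_scheme Theta p phi)"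
      "obedient n k Theta q rho (permute_scheme Theta p phi) (p \<circ> b)"
      using optimal_permute_scheme[OF bp sym p(1) \<open>1 \<le> k\<close> opt b obedient util] by auto
    show "\<forall>s<k. (p \<circ> b) s \<in> {1..n}"
      using b permutes_in_image[OF p(1)] by simp
    show "inj_on (p \<circ> b) {..<k}"
      using inj permutes_inj[OF p(1)] by (simp add: comp_inj_on inj_on_subset)
    show "(p \<circ> b) ` {..<k} = {1..k}"
      using p(2) by (simp add: image_comp)
  qed
qed

theorem lemma2p1:
  fixes n k :: nat
    and Theta :: "(nat \<Rightarrow> 't) set"
    and q :: "(nat \<Rightarrow> 't) \<Rightarrow> real"
    and rho xi :: "'t \<Rightarrow> real"
  assumes "2 \<le> k" and "k \<le> n"
    and "bp_instance n Theta q"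
  shows "(\<exists>phi rec. optimal_scheme n k Theta q rho xi phi
                  \<and> direct_persuasive n k Theta q rho phi rec \<and> inj_on rec {..<k})
       \<and> (symmetric_inst n Theta q \<longrightarrow>
           (\<exists>phi rec. optimal_scheme n k Theta q rho xi phi
                  \<and> direct_persuasive n k Theta q rho phi rec \<and> inj_on rec {..<k}
                  \<and> rec ` {..<k} = {1..k}))"
proof -
  have "1 \<le> k" using assms(1) by simp
  obtain phi b where opt: "optimal_scheme n k Theta q rho xi phi" and b: "\<forall>s<k. b s \<in> {1..n}"
    and inj: "inj_on b {..<k}" and obedient: "obedient n k Theta q rho phi b"
    and util: "rec_value k Theta q xi phi b = sender_util n k Theta q rho xi phi"
    by (rule optimal_obedient_injective_exists[OF \<open>1 \<le> k\<close> assms(2)])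
  moreover have "\<exists>phi rec. optimal_scheme n k Theta q rho xi phi
      \<and> direct_persuasive n k Theta q rho phi rec \<and> inj_on rec {..<k} \<and> rec ` {..<k} = {1..k}"
    if sym: "symmetric_inst n Theta q"
  proof -
    obtain psi rec where "optimal_scheme n k Theta q rho xi psi" "\<forall>s<k. rec s \<in> {1..n}"
      "inj_on rec {..<k}" "obedient n k Theta q rho psi rec" "rec ` {..<k} = {1..k}"
      by (rule symmetric_optimal_recommends_first_actions[OF assms(3) sym \<open>1 \<le> k\<close> assms(2)
            opt b inj obedient util])
    then show ?thesis
      using obedient_imp_direct_persuasive by blast
  qed
  ultimately show ?thesis
    using obedient_imp_direct_persuasive by blast
qed

end
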